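(* Let $H$ be a Hermitian operator on $\mathcal{H}=(\mathbb{C}^2)^{\otimes n}$ with spectral norm $\|H\|$, let $\lambda$ be such that $\langle \mathbb{1}\rangle(\lambda)>0$, let $M$ be the sample size of the estimators $\hat{\langle H\rangle}(\lambda)$ and $\hat{\langle \mathbb{1}\rangle}(\lambda)$, and let $\kappa>0$. Put $$\eta_H=\sqrt{\frac{\|H\|^2+\sigma_H^2}{\kappa M}},\qquad \eta_{\mathbb{1}}=\sqrt{\frac{1+\sigma_{\mathbb{1}}^2}{\kappa M}},\qquad \hat L''(\lambda)=\frac{\hat{\langle H\rangle}(\lambda)+\eta_H}{\hat{\langle \mathbb{1}\rangle}(\lambda)+\eta_{\mathbb{1}}}.$$ Then with probability at least $1-2\kappa$, $$\min\{\widetilde{\langle H\rangle}(\lambda),0\}\le \hat L''(\lambda)\le \widetilde{\langle H\rangle}(\lambda)+2\,\frac{\eta_H+\|H\|\eta_{\mathbb{1}}}{\langle \mathbb{1}\rangle(\lambda)}.$$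
   Context: Setting (variational quantum-circuit Monte Carlo). Fix $n$ qubits with Hilbert space $\mathcal{H}=(\mathbb{C}^2)^{\otimes n}$. A parameterised circuit gives normalised states $|\phi(\theta)\rangle=U(\theta)|0\rangle^{\otimes n}$, $\theta\in\Theta\subseteq\mathbb{R}^K$, with $U(\theta)$ unitary. A complex-valued guiding function $\alpha(\theta;\lambda)$ depends on parameters $\lambda$; let $C(\lambda)=\int_\Theta|\alpha(\theta;\lambda)|\,d\theta$ (finite and positive), $P(\theta;\lambda)=|\alpha(\theta;\lambda)|/C(\lambda)$, and $e^{i\gamma(\theta;\lambda)}=\alpha(\theta;\lambda)/|\alpha(\theta;\lambda)|$. The variational state is $|\psi(\lambda)\rangle=\int_\Theta P(\theta;\lambda)e^{i\gamma(\theta;\lambda)}|\phi(\theta)\rangle\,d\theta$. For an operator $O$, $\langle O\rangle(\lambda)=\langle\psi(\lambda)|O|\psi(\lambda)\rangle$ and $\widetilde{\langle O\rangle}(\lambda)=\langle O\rangle(\lambda)/\langle \mathbb{1}\rangle(\lambda)$. Estimator: for $\theta,\theta'$ let $X_{\theta,\theta'}=e^{i[\gamma(\theta;\lambda)-\gamma(\theta';\lambda)]}\langle\phi(\theta')|O|\phi(\theta)\rangle$. For each pair a measurement procedure outputs a random variable $\hat X_{\theta,\theta'}$; for Hermitian $O$ (here $O=H$ or $O=\mathbb{1}$) it is real-valued and unbiased for $\mathrm{Re}\,X_{\theta,\theta'}$ (whose average over the symmetric product density equals $\langle O\rangle(\lambda)$), with variance at most $\sigma_O^2$ for all $\theta,\theta'$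 ($\sigma_H^2$ for $O=H$, $\sigma_{\mathbb{1}}^2$ for $O=\mathbb{1}$). The estimator $\hat{\langle O\rangle}$ with sample size $M$ draws $M$ independent pairs $(\theta_l,\theta'_l)$ from the density $P(\theta;\lambda)P(\theta';\lambda)$, obtains independent $\hat X_{\theta_l,\theta'_l}$, and outputs their average. *)

theory Defs
  imports "HOL-Probability.Probability"
begin

text \<open>The Hilbert space (C^2)^{\<otimes> n} is modelled as complex ^ (bool ^ 'q) with
  n = CARD('q): the computational basis is indexed by n-bit strings.\<close>

definition cinner :: "complex ^ 'i \<Rightarrow> complex ^ 'i \<Rightarrow> complex" where
  "cinner u v = (\<Sum>i\<in>UNIV. cnj (u $ i) * v $ i)"

definition adjoint_mat :: "complex ^ 'i ^ 'i \<Rightarrow> complex ^ 'i ^ 'i" where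
  "adjoint_mat A = (\<chi> i j. cnj (A $ j $ i))"

definition hermitian :: "complex ^ 'i ^ 'i \<Rightarrow> bool" where
  "hermitian A \<longleftrightarrow> adjoint_mat A = A"

definition unitary :: "complex ^ 'i ^ 'i \<Rightarrow> bool" where
  "unitary U \<longleftrightarrow> U ** adjoint_mat U = mat 1 \<and> adjoint_mat U ** U = mat 1"

definition spec_norm :: "complex ^ 'i ^ 'i \<Rightarrow> real" where
  "spec_norm A = onorm (\<lambda>v. A *v v)"

definition ket0 :: "complex ^ (bool ^ 'q)" where
  "ket0 = axis (\<chi> _. False) 1"

text \<open>alpha is the guiding function alpha(.;lambda) at the fixed parameter lambda.\<close>

definition normC :: "(real ^ 'k) set \<Rightarrow> (real ^ 'k \<Rightarrow> complex) \<Rightarrow> real" where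
  "normC \<Theta> \<alpha> = (LINT \<theta>:\<Theta>|lborel. norm (\<alpha> \<theta>))"

definition Pdens :: "(real ^ 'k) set \<Rightarrow> (real ^ 'k \<Rightarrow> complex) \<Rightarrow> real ^ 'k \<Rightarrow> real" where
  "Pdens \<Theta> \<alpha> \<theta> = (if \<theta> \<in> \<Theta> then norm (\<alpha> \<theta>) / normC \<Theta> \<alpha> else 0)"

text \<open>e^{i gamma(theta)} = alpha(theta)/|alpha(theta)|.\<close>
definition phase :: "(real ^ 'k \<Rightarrow> complex) \<Rightarrow> real ^ 'k \<Rightarrow> complex" where
  "phase \<alpha> \<theta> = \<alpha> \<theta> / complex_of_real (norm (\<alpha> \<theta>))"

definition circ_state :: "(real ^ 'k \<Rightarrow> complex ^ (bool ^ 'q) ^ (bool ^ 'q)) \<Rightarrow> real ^ 'k \<Rightarrow> complex ^ (bool ^ 'q)" where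
  "circ_state U \<theta> = U \<theta> *v ket0"

definition psi ::
  "(real ^ 'k) set \<Rightarrow> (real ^ 'k \<Rightarrow> complex) \<Rightarrow> (real ^ 'k \<Rightarrow> complex ^ (bool ^ 'q) ^ (bool ^ 'q))
     \<Rightarrow> complex ^ (bool ^ 'q)" where
  "psi \<Theta> \<alpha> U = (LINT \<theta>:\<Theta>|lborel.
      (complex_of_real (Pdens \<Theta> \<alpha> \<theta>) * phase \<alpha> \<theta>) *s circ_state U \<theta>)"

text \<open>The unnormalised expectation value <Op>(lambda) = <psi|Op|psi>.\<close>
definition expval ::
  "(real ^ 'k) set \<Rightarrow> (real ^ 'k \<Rightarrow> complex) \<Rightarrow> (real ^ 'k \<Rightarrow> complex ^ (bool ^ 'q) ^ (bool ^ 'q))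
     \<Rightarrow> complex ^ (bool ^ 'q) ^ (bool ^ 'q) \<Rightarrow> complex" where
  "expval \<Theta> \<alpha> U Op = cinner (psi \<Theta> \<alpha> U) (Op *v psi \<Theta> \<alpha> U)"

definition Xpair ::
  "(real ^ 'k \<Rightarrow> complex) \<Rightarrow> (real ^ 'k \<Rightarrow> complex ^ (bool ^ 'q) ^ (bool ^ 'q))
     \<Rightarrow> complex ^ (bool ^ 'q) ^ (bool ^ 'q) \<Rightarrow> (real ^ 'k) \<times> (real ^ 'k) \<Rightarrow> complex" where
  "Xpair \<alpha> U Op p = phase \<alpha> (fst p) * cnj (phase \<alpha> (snd p))
       * cinner (circ_state U (snd p)) (Op *v circ_state U (fst p))"

definition pair_dist :: "(real ^ 'k) set \<Rightarrow> (real ^ 'k \<Rightarrow> complex) \<Rightarrow> ((real ^ 'k) \<times> (real ^ 'k)) measure" where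
  "pair_dist \<Theta> \<alpha> = density (lborel \<Otimes>\<^sub>M lborel)
      (\<lambda>p. ennreal (Pdens \<Theta> \<alpha> (fst p) * Pdens \<Theta> \<alpha> (snd p)))"

text \<open>Q p is the law of the measurement outcome hat X_{theta,theta'} for p = (theta,theta').\<close>
definition estimator_dist ::
  "(real ^ 'k) set \<Rightarrow> (real ^ 'k \<Rightarrow> complex) \<Rightarrow> ((real ^ 'k) \<times> (real ^ 'k) \<Rightarrow> real measure) \<Rightarrow> nat \<Rightarrow> real measure" where
  "estimator_dist \<Theta> \<alpha> Q M =
     distr (PiM {..<M} (\<lambda>_. pair_dist \<Theta> \<alpha> \<bind> Q)) borel (\<lambda>\<omega>. (\<Sum>l<M. \<omega> l) / real M)"

definition valid_measurement ::
  "(real ^ 'k) set \<Rightarrow> (real ^ 'k \<Rightarrow> complex) \<Rightarrow> (real ^ 'k \<Rightarrow> complex ^ (bool ^ 'q) ^ (bool ^ 'q))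
     \<Rightarrow> complex ^ (bool ^ 'q) ^ (bool ^ 'q) \<Rightarrow> real \<Rightarrow> ((real ^ 'k) \<times> (real ^ 'k) \<Rightarrow> real measure) \<Rightarrow> bool" where
  "valid_measurement \<Theta> \<alpha> U Op \<sigma> Q \<longleftrightarrow>
     Q \<in> measurable (lborel \<Otimes>\<^sub>M lborel) (prob_algebra borel) \<and>
     (\<forall>p \<in> \<Theta> \<times> \<Theta>.
        integrable (Q p) (\<lambda>x. x ^ 2) \<and>
        (\<integral>x. x \<partial>Q p) = Re (Xpair \<alpha> U Op p) \<and>
        (\<integral>x. (x - Re (Xpair \<alpha> U Op p)) ^ 2 \<partial>Q p) \<le> \<sigma> ^ 2)"

end

theory Submission
  imports Defs
begin

(* For O = H and O = 1, the quantity <O>(lambda) is the mean of Re X over the pair distribution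
   P x P, and |X| <= ||O|| because the circuit states are unit vectors.  One sample of the
   estimator -- draw a pair, then measure -- therefore has mean <O> and variance at most
   ||O||^2 + sigma_O^2, so the average of M independent samples has variance at most
   kappa eta_O^2, and Chebyshev's inequality bounds the probability of a deviation larger than
   eta_O by kappa.  Outside the two bad events (probability at most 2 kappa) the numerator and
   denominator of L'' overestimate <H> and <1> by at most 2 eta_H and 2 eta_1, and the claim
   follows from |<H>| <= ||H|| <1>. *)

section \<open>Complex vectors and matrices\<close>

lemma measurable_vec_nth[measurable (raw)]:
  fixes f :: "'a \<Rightarrow> 'b::real_normed_vector ^ 'n"
  assumes "f \<in> borel_measurable M"
  shows "(\<lambda>x. f x $ i) \<in> borel_measurable M"
  using measurable_compose[OF assms borel_measurable_continuous_onI[OF continuous_on_component[OF continuous_on_id]]]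
  by simp

lemma borel_measurable_vecI:
  fixes f :: "'a \<Rightarrow> 'b::euclidean_space ^ 'n"
  assumes "\<And>i. (\<lambda>x. f x $ i) \<in> borel_measurable M"
  shows "f \<in> borel_measurable M"
proof (subst borel_measurable_euclidean_space, intro ballI)
  fix b :: "'b ^ 'n" assume "b \<in> Basis"
  then obtain i u where b: "b = axis i u" "u \<in> Basis" by (auto simp: Basis_vec_def)
  have "(\<lambda>x. f x $ i \<bullet> u) \<in> borel_measurable M" using assms[of i] by measurable
  then show "(\<lambda>x. f x \<bullet> b) \<in> borel_measurable M" by (simp add: b inner_axis)
qed

lemma borel_measurable_cnj[measurable (raw)]:
  "f \<in> borel_measurable M \<Longrightarrow> (\<lambda>x. cnj (f x :: complex)) \<in> borel_measurable M"
  using measurable_compose[of f M borel cnj]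
    borel_measurable_continuous_onI[OF continuous_on_cnj[OF continuous_on_id]]
  by simp

lemma cnj_cinner: "cnj (cinner u v) = cinner v u"
  by (simp add: cinner_def mult.commute)

lemma cinner_self: "cinner v v = complex_of_real ((norm v)\<^sup>2)"
proof -
  have "cnj z * z = (complex_of_real (cmod z))\<^sup>2" for z
    by (metis complex_norm_square mult.commute of_real_power)
  then show ?thesis
    by (simp add: cinner_def norm_vec_def L2_set_def sum_nonneg)
qed

lemma norm_cinner_le: "norm (cinner u v) \<le> norm u * norm v"
proof -
  have "norm (cinner u v) \<le> (\<Sum>i\<in>UNIV. norm (cnj (u $ i) * v $ i))"
    unfolding cinner_def by (rule norm_sum)
  also have "\<dots> = (\<Sum>i\<in>UNIV. \<bar>norm (u $ i)\<bar> * \<bar>norm (v $ i)\<bar>)" by (simp add: norm_mult)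
  also have "\<dots> \<le> L2_set (\<lambda>i. norm (u $ i)) UNIV * L2_set (\<lambda>i. norm (v $ i)) UNIV"
    by (rule L2_set_mult_ineq)
  finally show ?thesis by (simp add: norm_vec_def)
qed

lemma cinner_matrix_vector_mult_left: "cinner (A *v u) w = cinner u (adjoint_mat A *v w)"
  by (simp add: cinner_def adjoint_mat_def matrix_vector_mult_def sum_distrib_left
      sum_distrib_right mult_ac) (rule sum.swap)

lemma cinner_scalar_mult: "cinner (a *s u) (A *v (b *s w)) = cnj a * b * cinner u (A *v w)"
  by (simp add: cinner_def matrix_vector_mult_def sum_distrib_left mult_ac)

lemma bounded_linear_cinner: "bounded_linear (cinner (u :: complex ^ 'i))"
proof -
  have "linear (cinner u)"
  proof (rule linearI)
    fix b c :: "complex ^ 'i" and r :: real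
    show "cinner u (b + c) = cinner u b + cinner u c"
      by (simp add: cinner_def sum.distrib distrib_left)
    show "cinner u (r *\<^sub>R b) = r *\<^sub>R cinner u b"
      by (simp add: cinner_def scaleR_vec_def scaleR_sum_right)
  qed
  then show ?thesis by (simp add: linear_conv_bounded_linear)
qed

lemma norm_vector_scalar_mult: "norm ((c :: complex) *s (x :: complex ^ 'i)) = norm c * norm x"
  by (simp add: norm_vec_def L2_set_right_distrib norm_mult)

lemma norm_unitary_mult:
  assumes "unitary U"
  shows "norm (U *v v) = norm v"
proof -
  have "cinner (U *v v) (U *v v) = cinner v v"
    using assms by (simp add: cinner_matrix_vector_mult_left matrix_vector_mul_assoc unitary_def)
  then have "(norm (U *v v))\<^sup>2 = (norm v)\<^sup>2"
    by (simp only: cinner_self of_real_eq_iff)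
  then show ?thesis by simp
qed

lemma norm_le_spec_norm: "norm (A *v v) \<le> spec_norm A * norm (v :: complex ^ 'i)"
  unfolding spec_norm_def by (rule onorm) simp

lemma spec_norm_nonneg: "0 \<le> spec_norm (A :: complex ^ 'i ^ 'i)"
  unfolding spec_norm_def by (rule onorm_pos_le) simp

lemma spec_norm_mat_1: "spec_norm (mat 1 :: complex ^ 'i ^ 'i) = 1"
  by (simp add: spec_norm_def onorm_id)

lemma abs_Re_cinner_le_spec_norm:
  "\<bar>Re (cinner v (A *v v))\<bar> \<le> spec_norm A * Re (cinner v (mat 1 *v v))"
proof -
  have "\<bar>Re (cinner v (A *v v))\<bar> \<le> norm v * norm (A *v v)"
    using abs_Re_le_cmod norm_cinner_le order_trans by blast
  also have "\<dots> \<le> norm v * (spec_norm A * norm v)"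
    by (intro mult_left_mono norm_le_spec_norm) simp
  also have "\<dots> = spec_norm A * Re (cinner v (mat 1 *v v))"
    by (simp add: cinner_self power2_eq_square)
  finally show ?thesis .
qed

lemma Re_divide_cinner_self: "Re (z / cinner v (mat 1 *v v)) = Re z / Re (cinner v (mat 1 *v v))"
  by (simp add: cinner_self)

section \<open>Mixtures, sample means and deviations\<close>

lemma sets_bind_borel:
  assumes "prob_space PD" and "Q \<in> PD \<rightarrow>\<^sub>M subprob_algebra (borel :: real measure)"
  shows "sets (PD \<bind> Q) = sets borel"
proof -
  have "space PD \<noteq> {}" using prob_space.not_empty[OF assms(1)] .
  then show ?thesis using subprob_measurableD(2)[OF assms(2)] by simp
qed

text \<open>The Giry monad library only integrates bounded functions over a bind; the moments of a
  mixture need unbounded integrands.\<close>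

lemma integral_bind_nonneg:
  fixes h :: "real \<Rightarrow> real"
  assumes PD: "prob_space PD" and Q: "Q \<in> PD \<rightarrow>\<^sub>M subprob_algebra borel"
    and h[measurable]: "h \<in> borel_measurable borel" and nonneg: "\<And>x. 0 \<le> h x"
    and int_Q: "AE p in PD. integrable (Q p) h"
    and int_PD: "integrable PD (\<lambda>p. \<integral>x. h x \<partial>Q p)"
  shows "integrable (PD \<bind> Q) h" "integral\<^sup>L (PD \<bind> Q) h = (\<integral>p. (\<integral>x. h x \<partial>Q p) \<partial>PD)"
proof -
  have h_bind: "h \<in> borel_measurable (PD \<bind> Q)"
    using measurable_cong_sets[OF sets_bind_borel[OF PD Q] refl] h by blast
  have "(\<integral>\<^sup>+x. ennreal (h x) \<partial>(PD \<bind> Q)) = (\<integral>\<^sup>+p. (\<integral>\<^sup>+x. ennreal (h x) \<partial>Q p) \<partial>PD)"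
    by (rule nn_integral_bind[OF _ Q]) measurable
  also have "\<dots> = (\<integral>\<^sup>+p. ennreal (\<integral>x. h x \<partial>Q p) \<partial>PD)"
    using int_Q by (intro nn_integral_cong_AE) (auto intro!: nn_integral_eq_integral nonneg)
  also have "\<dots> = ennreal (\<integral>p. (\<integral>x. h x \<partial>Q p) \<partial>PD)"
    by (rule nn_integral_eq_integral[OF int_PD]) (simp add: integral_nonneg nonneg)
  finally have eq: "(\<integral>\<^sup>+x. ennreal (h x) \<partial>(PD \<bind> Q)) = ennreal (\<integral>p. (\<integral>x. h x \<partial>Q p) \<partial>PD)" .
  show "integrable (PD \<bind> Q) h"
    by (rule integrableI_nonneg[OF h_bind]) (simp_all add: nonneg eq)
  show "integral\<^sup>L (PD \<bind> Q) h = (\<integral>p. (\<integral>x. h x \<partial>Q p) \<partial>PD)"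
    by (subst integral_eq_nn_integral[OF h_bind]) (simp_all add: nonneg eq integral_nonneg)
qed

lemma integral_bind_real:
  fixes f :: "real \<Rightarrow> real"
  assumes PD: "prob_space PD" and Q: "Q \<in> PD \<rightarrow>\<^sub>M subprob_algebra borel"
    and f[measurable]: "f \<in> borel_measurable borel"
    and int_Q: "AE p in PD. integrable (Q p) f"
    and int_PD: "integrable PD (\<lambda>p. \<integral>x. \<bar>f x\<bar> \<partial>Q p)"
  shows "integrable (PD \<bind> Q) f" "integral\<^sup>L (PD \<bind> Q) f = (\<integral>p. (\<integral>x. f x \<partial>Q p) \<partial>PD)"
proof -
  define fp where "fp = (\<lambda>x. max (f x) 0)"
  define fn where "fn = (\<lambda>x. max (- f x) 0)"
  have [measurable]: "fp \<in> borel_measurable borel" "fn \<in> borel_measurable borel"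
    unfolding fp_def fn_def by measurable
  have f_eq: "f = (\<lambda>x. fp x - fn x)" by (auto simp: fp_def fn_def max_def)
  have int_Q_fp: "AE p in PD. integrable (Q p) fp" and int_Q_fn: "AE p in PD. integrable (Q p) fn"
    using int_Q by (eventually_elim, simp add: fp_def fn_def)+
  have integral_Q_measurable: "(\<lambda>p. \<integral>x. g x \<partial>Q p) \<in> borel_measurable PD"
    if [measurable]: "g \<in> borel_measurable borel" for g :: "real \<Rightarrow> real"
    by (rule measurable_compose[OF Q integral_measurable_subprob_algebra]) simp
  have int_PD_part: "integrable PD (\<lambda>p. \<integral>x. g x \<partial>Q p)"
    if [measurable]: "g \<in> borel_measurable borel" and g: "\<And>x. 0 \<le> g x" "\<And>x. g x \<le> \<bar>f x\<bar>"
      and int_g: "AE p in PD. integrable (Q p) g" for g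
  proof (rule Bochner_Integration.integrable_bound[OF int_PD integral_Q_measurable])
    show "AE p in PD. norm (\<integral>x. g x \<partial>Q p) \<le> norm (\<integral>x. \<bar>f x\<bar> \<partial>Q p)"
      using int_Q int_g by eventually_elim (auto simp: g integral_nonneg intro!: integral_mono)
  qed simp
  have int_PD_fp: "integrable PD (\<lambda>p. \<integral>x. fp x \<partial>Q p)"
    and int_PD_fn: "integrable PD (\<lambda>p. \<integral>x. fn x \<partial>Q p)"
    by (rule int_PD_part[OF _ _ _ int_Q_fp] int_PD_part[OF _ _ _ int_Q_fn]; simp add: fp_def fn_def)+
  have parts_nonneg: "\<And>x. 0 \<le> fp x" "\<And>x. 0 \<le> fn x" by (simp_all add: fp_def fn_def)
  note P = integral_bind_nonneg[OF PD Q _ parts_nonneg(1) int_Q_fp int_PD_fp]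
    and N = integral_bind_nonneg[OF PD Q _ parts_nonneg(2) int_Q_fn int_PD_fn]
  show "integrable (PD \<bind> Q) f"
    unfolding f_eq using P(1) N(1) by simp
  have "integral\<^sup>L (PD \<bind> Q) f = (\<integral>p. (\<integral>x. fp x \<partial>Q p) \<partial>PD) - (\<integral>p. (\<integral>x. fn x \<partial>Q p) \<partial>PD)"
    unfolding f_eq using P N by simp
  also have "\<dots> = (\<integral>p. (\<integral>x. fp x \<partial>Q p) - (\<integral>x. fn x \<partial>Q p) \<partial>PD)"
    by (rule Bochner_Integration.integral_diff[symmetric, OF int_PD_fp int_PD_fn])
  also have "\<dots> = (\<integral>p. (\<integral>x. f x \<partial>Q p) \<partial>PD)"
  proof (intro integral_cong_AE)
    show "AE p in PD. (\<integral>x. fp x \<partial>Q p) - (\<integral>x. fn x \<partial>Q p) = (\<integral>x. f x \<partial>Q p)"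
      using int_Q_fp int_Q_fn by eventually_elim (simp add: f_eq)
  qed (use integral_Q_measurable in simp_all)
  finally show "integral\<^sup>L (PD \<bind> Q) f = (\<integral>p. (\<integral>x. f x \<partial>Q p) \<partial>PD)" .
qed

lemma (in prob_space) second_moment_le:
  fixes X :: "'a \<Rightarrow> real"
  assumes [measurable]: "X \<in> borel_measurable M" and int: "integrable M (\<lambda>x. (X x)\<^sup>2)"
    and var: "variance X \<le> V" and mean: "\<bar>expectation X\<bar> \<le> B"
  shows "expectation (\<lambda>x. (X x)\<^sup>2) \<le> V + B\<^sup>2"
proof -
  have "integrable M X" using square_integrable_imp_integrable[OF _ int] by simp
  then have "expectation (\<lambda>x. (X x)\<^sup>2) = variance X + (expectation X)\<^sup>2"
    using variance_eq int by simp
  also have "(expectation X)\<^sup>2 \<le> B\<^sup>2"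
    using mean by (metis abs_ge_zero power2_abs power_mono)
  finally show ?thesis using var by simp
qed

lemma abs_le_1_plus_square: "\<bar>x :: real\<bar> \<le> 1 + x\<^sup>2"
proof (cases "\<bar>x\<bar> \<le> 1")
  case False
  then have "\<bar>x\<bar> * 1 \<le> \<bar>x\<bar> * \<bar>x\<bar>" by (intro mult_left_mono) auto
  then show ?thesis by (simp add: power2_eq_square)
qed (simp add: add_increasing2)

lemma bind_moments:
  fixes Q :: "'p \<Rightarrow> real measure" and g :: "'p \<Rightarrow> real"
  assumes PD: "prob_space PD" and Q: "Q \<in> PD \<rightarrow>\<^sub>M prob_algebra borel"
    and g: "g \<in> borel_measurable PD"
    and moments: "AE p in PD. integrable (Q p) (\<lambda>x. x\<^sup>2) \<and> (\<integral>x. x \<partial>Q p) = g p \<and> (\<integral>x. x\<^sup>2 \<partial>Q p) \<le> V"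
  shows "prob_space (PD \<bind> Q)" "sets (PD \<bind> Q) = sets borel"
    "integrable (PD \<bind> Q) (\<lambda>x. x\<^sup>2)" "(\<integral>x. x \<partial>(PD \<bind> Q)) = (\<integral>p. g p \<partial>PD)"
    "(\<integral>x. x\<^sup>2 \<partial>(PD \<bind> Q)) \<le> V"
proof -
  interpret PD: prob_space PD by (rule PD)
  have Q_sub: "Q \<in> PD \<rightarrow>\<^sub>M subprob_algebra borel" by (rule measurable_prob_algebraD[OF Q])
  show "prob_space (PD \<bind> Q)"
    by (rule prob_space_bind'[OF _ Q]) (simp add: space_prob_algebra PD)
  show "sets (PD \<bind> Q) = sets borel" by (rule sets_bind_borel[OF PD Q_sub])
  have integral_Q_measurable: "(\<lambda>p. \<integral>x. h x \<partial>Q p) \<in> borel_measurable PD"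
    if [measurable]: "h \<in> borel_measurable borel" for h :: "real \<Rightarrow> real"
    by (rule measurable_compose[OF Q_sub integral_measurable_subprob_algebra]) simp
  have first_moment: "integrable (Q p) (\<lambda>x. x) \<and> (\<integral>x. \<bar>x\<bar> \<partial>Q p) \<le> 1 + V"
    if p: "p \<in> space PD" "integrable (Q p) (\<lambda>x. x\<^sup>2)" "(\<integral>x. x\<^sup>2 \<partial>Q p) \<le> V" for p
  proof -
    interpret Qp: prob_space "Q p"
      using measurable_space[OF Q p(1)] by (simp add: space_prob_algebra)
    have [measurable_cong]: "sets (Q p) = sets borel"
      using measurable_space[OF Q p(1)] by (simp add: space_prob_algebra)
    have int: "integrable (Q p) (\<lambda>x. x)"
      by (rule Qp.square_integrable_imp_integrable[OF _ p(2)]) simp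
    have "(\<integral>x. \<bar>x\<bar> \<partial>Q p) \<le> (\<integral>x. 1 + x\<^sup>2 \<partial>Q p)"
      using int p(2) by (intro integral_mono abs_le_1_plus_square) auto
    also have "\<dots> \<le> 1 + V" using p by (simp add: Qp.prob_space)
    finally show ?thesis using int by simp
  qed
  have first_moment_AE: "AE p in PD. integrable (Q p) (\<lambda>x. x) \<and> (\<integral>x. \<bar>x\<bar> \<partial>Q p) \<le> 1 + V"
    using moments AE_space by eventually_elim (use first_moment in blast)
  have "integrable PD (\<lambda>p. \<integral>x. \<bar>x\<bar> \<partial>Q p)"
    using first_moment_AE
    by (intro PD.integrable_const_bound[where B="1 + V"] integral_Q_measurable)
       (auto simp: integral_nonneg)
  note mean = integral_bind_real[OF PD Q_sub _ _ this]
  have int_second: "integrable PD (\<lambda>p. \<integral>x. x\<^sup>2 \<partial>Q p)"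
    using moments
    by (intro PD.integrable_const_bound[where B=V] integral_Q_measurable) auto
  note second = integral_bind_nonneg[OF PD Q_sub _ _ _ int_second]
  show "integrable (PD \<bind> Q) (\<lambda>x. x\<^sup>2)" using second(1) moments by auto
  have "(\<integral>x. x \<partial>(PD \<bind> Q)) = (\<integral>p. (\<integral>x. x \<partial>Q p) \<partial>PD)"
    using mean(2) first_moment_AE by auto
  also have "\<dots> = (\<integral>p. g p \<partial>PD)"
    using moments g integral_Q_measurable[of "\<lambda>x. x"] by (intro integral_cong_AE) auto
  finally show "(\<integral>x. x \<partial>(PD \<bind> Q)) = (\<integral>p. g p \<partial>PD)" .
  have "(\<integral>x. x\<^sup>2 \<partial>(PD \<bind> Q)) = (\<integral>p. (\<integral>x. x\<^sup>2 \<partial>Q p) \<partial>PD)"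
    using second(2) moments by auto
  also have "\<dots> \<le> (\<integral>p. V \<partial>PD)"
    using moments int_second by (intro integral_mono_AE) auto
  finally show "(\<integral>x. x\<^sup>2 \<partial>(PD \<bind> Q)) \<le> V" by (simp add: PD.prob_space)
qed

context
  fixes S :: "real measure" and m :: real and M :: nat
  assumes S: "prob_space S" and sets_S: "sets S = sets borel"
    and int_S: "integrable S (\<lambda>x. x\<^sup>2)" and mean_S: "(\<integral>x. x \<partial>S) = m"
begin

lemma PiM_integral_centered_product:
  assumes l: "l < M" "l' < M"
  shows "integrable (PiM {..<M} (\<lambda>_. S)) (\<lambda>\<omega>. (\<omega> l - m) * (\<omega> l' - m))"
    "(\<integral>\<omega>. (\<omega> l - m) * (\<omega> l' - m) \<partial>PiM {..<M} (\<lambda>_. S)) = (if l = l' then (\<integral>x. (x - m)\<^sup>2 \<partial>S) else 0)"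
proof -
  interpret S: prob_space S by (rule S)
  interpret P: product_prob_space "\<lambda>_. S" "{..<M}" by (rule product_prob_spaceI) (rule S)
  have int_x: "integrable S (\<lambda>x. x)"
    using S.square_integrable_imp_integrable[OF _ int_S] sets_S by simp
  then have int_1: "integrable S (\<lambda>x. x - m)" by simp
  have int_2: "integrable S (\<lambda>x. (x - m)\<^sup>2)"
    using int_x int_S by (simp add: power2_diff)
  have centered: "(\<integral>x. x - m \<partial>S) = 0"
    using int_x mean_S by (simp add: S.prob_space)
  define f where "f i x = (if i = l then x - m else 1) * (if i = l' then x - m else (1::real))" for i x
  have int_f: "integrable S (f i)" for i
    unfolding f_def using int_1 int_2
    by (cases "i = l"; cases "i = l'") (simp_all add: power2_eq_square)
  have prod_f: "(\<Prod>i<M. f i (\<omega> i)) = (\<omega> l - m) * (\<omega> l' - m)" for \<omega>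
    using l by (simp add: f_def prod.distrib)
  have "integrable (PiM {..<M} (\<lambda>_. S)) (\<lambda>\<omega>. \<Prod>i<M. f i (\<omega> i))"
    by (rule P.product_integrable_prod) (auto intro: int_f)
  then show "integrable (PiM {..<M} (\<lambda>_. S)) (\<lambda>\<omega>. (\<omega> l - m) * (\<omega> l' - m))"
    by (simp add: prod_f)
  have "(\<integral>\<omega>. (\<Prod>i<M. f i (\<omega> i)) \<partial>PiM {..<M} (\<lambda>_. S)) = (\<Prod>i<M. integral\<^sup>L S (f i))"
    by (rule P.product_integral_prod) (auto intro: int_f)
  also have "\<dots> = (if l = l' then (\<integral>x. (x - m)\<^sup>2 \<partial>S) else 0)"
  proof (cases "l = l'")
    case True
    have "(\<Prod>i<M. integral\<^sup>L S (f i)) = (\<Prod>i<M. if i = l then (\<integral>x. (x - m)\<^sup>2 \<partial>S) else 1)"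
      by (rule prod.cong) (auto simp: f_def[abs_def] True power2_eq_square S.prob_space)
    then show ?thesis using True l by simp
  next
    case False
    have "integral\<^sup>L S (f l) = 0" using False centered by (simp add: f_def[abs_def])
    then show ?thesis using False l by (auto intro: prod_zero)
  qed
  finally show "(\<integral>\<omega>. (\<omega> l - m) * (\<omega> l' - m) \<partial>PiM {..<M} (\<lambda>_. S)) = (if l = l' then (\<integral>x. (x - m)\<^sup>2 \<partial>S) else 0)"
    by (simp add: prod_f)
qed

lemma sample_mean_measurable:
  "(\<lambda>\<omega>. (\<Sum>l<M. \<omega> l) / real M) \<in> borel_measurable (PiM {..<M} (\<lambda>_. S))"
proof -
  have "(\<lambda>\<omega>. \<omega> l) \<in> PiM {..<M} (\<lambda>_. S) \<rightarrow>\<^sub>M S" if "l < M" for l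
    using that by (intro measurable_component_singleton) auto
  then have "(\<lambda>\<omega>. \<omega> l) \<in> borel_measurable (PiM {..<M} (\<lambda>_. S))" if "l < M" for l
    using that measurable_cong_sets[OF refl sets_S] by blast
  then show ?thesis by (intro borel_measurable_divide borel_measurable_sum) auto
qed

text \<open>Only the diagonal terms survive when the square of the centered sum is expanded.\<close>

lemma sample_mean_variance:
  assumes "M > 0"
  shows "integrable (PiM {..<M} (\<lambda>_. S)) (\<lambda>\<omega>. ((\<Sum>l<M. \<omega> l) / real M - m)\<^sup>2)"
    "(\<integral>\<omega>. ((\<Sum>l<M. \<omega> l) / real M - m)\<^sup>2 \<partial>PiM {..<M} (\<lambda>_. S)) = (\<integral>x. (x - m)\<^sup>2 \<partial>S) / real M"
proof -
  let ?P = "PiM {..<M} (\<lambda>_. S)"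
  note cross = PiM_integral_centered_product
  have square_eq: "((\<Sum>l<M. \<omega> l) / real M - m)\<^sup>2
      = (\<Sum>l<M. \<Sum>l'<M. (\<omega> l - m) * (\<omega> l' - m)) / (real M)\<^sup>2" for \<omega>
  proof -
    have "(\<Sum>l<M. \<omega> l) / real M - m = (\<Sum>l<M. \<omega> l - m) / real M"
      using assms by (simp add: sum_subtractf field_simps)
    then show ?thesis by (simp add: power2_eq_square power_divide sum_product)
  qed
  have int_sum: "integrable ?P (\<lambda>\<omega>. \<Sum>l<M. \<Sum>l'<M. (\<omega> l - m) * (\<omega> l' - m))"
    using cross(1) by (intro Bochner_Integration.integrable_sum) auto
  then show "integrable ?P (\<lambda>\<omega>. ((\<Sum>l<M. \<omega> l) / real M - m)\<^sup>2)"
    unfolding square_eq by simp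
  have "(\<integral>\<omega>. (\<Sum>l<M. \<Sum>l'<M. (\<omega> l - m) * (\<omega> l' - m)) \<partial>?P)
      = (\<Sum>l<M. \<Sum>l'<M. (\<integral>\<omega>. (\<omega> l - m) * (\<omega> l' - m) \<partial>?P))"
    using cross(1) by (subst Bochner_Integration.integral_sum) auto
  also have "\<dots> = real M * (\<integral>x. (x - m)\<^sup>2 \<partial>S)"
    using cross(2) by simp
  finally show "(\<integral>\<omega>. ((\<Sum>l<M. \<omega> l) / real M - m)\<^sup>2 \<partial>?P) = (\<integral>x. (x - m)\<^sup>2 \<partial>S) / real M"
    unfolding square_eq using assms by (simp add: power2_eq_square)
qed

end

lemma (in prob_space) deviation_prob_le:
  fixes Y :: "'a \<Rightarrow> real"
  assumes [measurable]: "Y \<in> borel_measurable M"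
    and int: "integrable M (\<lambda>x. (Y x - m)\<^sup>2)" and second: "(\<integral>x. (Y x - m)\<^sup>2 \<partial>M) \<le> \<kappa> * \<eta>\<^sup>2"
    and "0 \<le> \<eta>" "0 \<le> \<kappa>"
  shows "prob {x \<in> space M. \<eta> < \<bar>Y x - m\<bar>} \<le> \<kappa>"
proof (cases "\<eta> = 0")
  case False
  then have "\<eta> > 0" using \<open>0 \<le> \<eta>\<close> by simp
  have "prob {x \<in> space M. \<eta> < \<bar>Y x - m\<bar>} \<le> prob {x \<in> space M. \<eta> \<le> \<bar>Y x - m\<bar>}"
    by (rule finite_measure_mono) auto
  also have "\<dots> \<le> (\<integral>x. (Y x - m)\<^sup>2 \<partial>M) / \<eta>\<^sup>2"
    by (rule second_moment_method[OF _ int \<open>\<eta> > 0\<close>]) simp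
  also have "\<dots> \<le> \<kappa>" using second \<open>\<eta> > 0\<close> by (simp add: pos_divide_le_eq)
  finally show ?thesis .
next
  case True
  \<comment> \<open>Chebyshev's bound is vacuous here; instead \<open>Y = m\<close> almost surely.\<close>
  have "(\<integral>x. (Y x - m)\<^sup>2 \<partial>M) \<le> 0" using second True by simp
  moreover have "0 \<le> (\<integral>x. (Y x - m)\<^sup>2 \<partial>M)" by (rule Bochner_Integration.integral_nonneg) simp
  ultimately have "(\<integral>x. (Y x - m)\<^sup>2 \<partial>M) = 0" by linarith
  then have "AE x in M. \<not> \<eta> < \<bar>Y x - m\<bar>"
    using integral_nonneg_eq_0_iff_AE[OF int] True by simp
  then have "prob {x \<in> space M. \<eta> < \<bar>Y x - m\<bar>} = 0"
    by (simp add: AE_iff_measurable[OF _ refl] measure_def)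
  then show ?thesis using \<open>0 \<le> \<kappa>\<close> by simp
qed

lemma (in prob_space) prob_ge_of_failure_bounds:
  assumes [measurable]: "Measurable.pred M P" "Measurable.pred M Q" "Measurable.pred M R"
    and "prob {x \<in> space M. \<not> P x} \<le> a" "prob {x \<in> space M. \<not> Q x} \<le> b"
    and "\<And>x. P x \<Longrightarrow> Q x \<Longrightarrow> R x"
  shows "prob {x \<in> space M. R x} \<ge> 1 - (a + b)"
proof -
  let ?bad = "{x \<in> space M. \<not> P x} \<union> {x \<in> space M. \<not> Q x}"
  have "prob ?bad \<le> a + b"
    using measure_subadditive[of "{x \<in> space M. \<not> P x}" M "{x \<in> space M. \<not> Q x}"] assms(4,5)
    by (simp add: emeasure_eq_measure)
  moreover have "prob {x \<in> space M. \<not> R x} \<le> prob ?bad"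
    using assms(6) by (intro finite_measure_mono) auto
  ultimately show ?thesis using prob_neg[of R] by simp
qed

section \<open>Ratios of upper confidence bounds\<close>

lemma upper_confidence_ratio_bounds:
  fixes h I a b \<epsilon>h \<epsilon>I c :: real
  assumes I: "0 < I" and h: "\<bar>h\<bar> \<le> c * I" and "0 \<le> c" "0 \<le> \<epsilon>h" "0 \<le> \<epsilon>I"
    and a: "\<bar>a - h\<bar> \<le> \<epsilon>h" and b: "\<bar>b - I\<bar> \<le> \<epsilon>I"
  shows "min (h / I) 0 \<le> (a + \<epsilon>h) / (b + \<epsilon>I)"
    and "(a + \<epsilon>h) / (b + \<epsilon>I) \<le> h / I + 2 * (\<epsilon>h + c * \<epsilon>I) / I"
proof -
  define N D where "N = a + \<epsilon>h" and "D = b + \<epsilon>I"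
  have N: "h \<le> N" "N \<le> h + 2 * \<epsilon>h" using a by (auto simp: N_def abs_le_iff)
  have D: "I \<le> D" "D \<le> I + 2 * \<epsilon>I" using b by (auto simp: D_def abs_le_iff)
  have "0 < D" using D I by linarith
  show "min (h / I) 0 \<le> (a + \<epsilon>h) / (b + \<epsilon>I)"
  proof (cases "0 \<le> h")
    case True
    then have "0 \<le> N / D" using N \<open>0 < D\<close> by simp
    then show ?thesis by (simp add: N_def D_def)
  next
    case False
    have "h / I \<le> h / D" using False D(1) I by (simp add: divide_simps mult_left_mono_neg)
    also have "\<dots> \<le> N / D" using N(1) \<open>0 < D\<close> by (simp add: divide_right_mono)
    finally show ?thesis by (simp add: N_def D_def)
  qed
  have "h * (I - D) = (- h) * (D - I)" by (simp add: algebra_simps)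
  also have "\<dots> \<le> \<bar>h\<bar> * (D - I)" using D(1) by (intro mult_right_mono) auto
  also have "\<dots> \<le> (c * I) * (2 * \<epsilon>I)" using h D by (intro mult_mono) auto
  also have "\<dots> \<le> (c * D) * (2 * \<epsilon>I)"
    using D(1) \<open>0 \<le> c\<close> \<open>0 \<le> \<epsilon>I\<close> by (intro mult_right_mono mult_left_mono) auto
  finally have "h * I \<le> h * D + 2 * c * \<epsilon>I * D" by (simp add: algebra_simps)
  moreover have "2 * \<epsilon>h * I \<le> 2 * \<epsilon>h * D" using D(1) \<open>0 \<le> \<epsilon>h\<close> by (simp add: mult_left_mono)
  moreover have "N * I \<le> (h + 2 * \<epsilon>h) * I" using N(2) I by simp
  ultimately have "N * I \<le> D * (h + 2 * (\<epsilon>h + c * \<epsilon>I))" by (simp add: algebra_simps)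
  then have "N / D \<le> h / I + 2 * (\<epsilon>h + c * \<epsilon>I) / I"
    using I \<open>0 < D\<close> by (simp add: divide_simps add_divide_distrib[symmetric] mult.commute)
  then show "(a + \<epsilon>h) / (b + \<epsilon>I) \<le> h / I + 2 * (\<epsilon>h + c * \<epsilon>I) / I"
    by (simp add: N_def D_def)
qed

section \<open>The variational state as an average over parameters\<close>

definition param_dist :: "(real ^ 'k) set \<Rightarrow> (real ^ 'k \<Rightarrow> complex) \<Rightarrow> (real ^ 'k) measure" where
  "param_dist \<Theta> \<alpha> = density lborel (\<lambda>\<theta>. ennreal (Pdens \<Theta> \<alpha> \<theta>))"

definition phased_state ::
  "(real ^ 'k \<Rightarrow> complex) \<Rightarrow> (real ^ 'k \<Rightarrow> complex ^ (bool ^ 'q) ^ (bool ^ 'q)) \<Rightarrow> real ^ 'k \<Rightarrow> complex ^ (bool ^ 'q)"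
where
  "phased_state \<alpha> U \<theta> = phase \<alpha> \<theta> *s circ_state U \<theta>"

lemma norm_phase_le: "norm (phase \<alpha> \<theta>) \<le> 1"
  by (cases "\<alpha> \<theta> = 0") (simp_all add: phase_def norm_divide)

context
  fixes \<Theta> :: "(real ^ 'k) set"
    and \<alpha> :: "real ^ 'k \<Rightarrow> complex"
    and U :: "real ^ 'k \<Rightarrow> complex ^ (bool ^ 'q) ^ (bool ^ 'q)"
  assumes Theta_meas: "\<Theta> \<in> sets lborel"
    and alpha_meas: "\<alpha> \<in> borel_measurable lborel"
    and U_unitary: "\<forall>\<theta>\<in>\<Theta>. unitary (U \<theta>)"
    and U_meas: "U \<in> borel_measurable lborel"
    and C_fin: "set_integrable lborel \<Theta> (\<lambda>\<theta>. norm (\<alpha> \<theta>))"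
    and C_pos: "normC \<Theta> \<alpha> > 0"
begin

lemma Theta_borel[measurable]: "\<Theta> \<in> sets borel"
  using Theta_meas by simp

lemma alpha_borel[measurable]: "\<alpha> \<in> borel_measurable borel"
  using alpha_meas by simp

lemma U_borel[measurable]: "U \<in> borel_measurable borel"
  using U_meas by simp

lemma Pdens_eq: "Pdens \<Theta> \<alpha> = (\<lambda>\<theta>. (indicator \<Theta> \<theta> *\<^sub>R norm (\<alpha> \<theta>)) / normC \<Theta> \<alpha>)"
  by (auto simp: Pdens_def indicator_def)

lemma Pdens_measurable[measurable]: "Pdens \<Theta> \<alpha> \<in> borel_measurable borel"
  unfolding Pdens_eq by measurable

lemma Pdens_nonneg: "0 \<le> Pdens \<Theta> \<alpha> \<theta>"
  using C_pos by (simp add: Pdens_def)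

lemma prob_space_param_dist: "prob_space (param_dist \<Theta> \<alpha>)"
proof
  have int: "integrable lborel (Pdens \<Theta> \<alpha>)"
    using C_fin by (simp add: Pdens_eq set_integrable_def)
  have "emeasure (param_dist \<Theta> \<alpha>) (space (param_dist \<Theta> \<alpha>)) = (\<integral>\<^sup>+ x. ennreal (Pdens \<Theta> \<alpha> x) \<partial>lborel)"
    by (simp add: param_dist_def emeasure_density)
  also have "\<dots> = ennreal (integral\<^sup>L lborel (Pdens \<Theta> \<alpha>))"
    by (rule nn_integral_eq_integral[OF int]) (simp add: Pdens_nonneg)
  also have "integral\<^sup>L lborel (Pdens \<Theta> \<alpha>) = 1"
    using C_pos by (simp add: Pdens_eq normC_def set_lebesgue_integral_def)
  finally show "emeasure (param_dist \<Theta> \<alpha>) (space (param_dist \<Theta> \<alpha>)) = 1" by simp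
qed

lemma sets_param_dist[simp, measurable_cong]: "sets (param_dist \<Theta> \<alpha>) = sets borel"
  by (simp add: param_dist_def)

lemma AE_param_dist: "AE \<theta> in param_dist \<Theta> \<alpha>. \<theta> \<in> \<Theta>"
  unfolding param_dist_def by (subst AE_density) (auto simp: Pdens_def split: if_splits)

lemma pair_dist_eq: "pair_dist \<Theta> \<alpha> = param_dist \<Theta> \<alpha> \<Otimes>\<^sub>M param_dist \<Theta> \<alpha>"
proof -
  interpret D: prob_space "param_dist \<Theta> \<alpha>" by (rule prob_space_param_dist)
  have "param_dist \<Theta> \<alpha> \<Otimes>\<^sub>M param_dist \<Theta> \<alpha> = density (lborel \<Otimes>\<^sub>M lborel)
       (\<lambda>(x, y). ennreal (Pdens \<Theta> \<alpha> x) * ennreal (Pdens \<Theta> \<alpha> y))"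
    unfolding param_dist_def
    by (rule pair_measure_density)
       (auto simp: D.sigma_finite_measure_axioms[unfolded param_dist_def] lborel.sigma_finite_measure_axioms)
  also have "\<dots> = pair_dist \<Theta> \<alpha>"
    unfolding pair_dist_def by (rule density_cong) (auto simp: ennreal_mult Pdens_nonneg)
  finally show ?thesis by simp
qed

lemma prob_space_pair_dist: "prob_space (pair_dist \<Theta> \<alpha>)"
proof -
  interpret D: prob_space "param_dist \<Theta> \<alpha>" by (rule prob_space_param_dist)
  interpret P: pair_prob_space "param_dist \<Theta> \<alpha>" "param_dist \<Theta> \<alpha>" by unfold_locales
  show ?thesis unfolding pair_dist_eq by (rule P.prob_space_axioms)
qed

lemma sets_pair_dist[simp, measurable_cong]: "sets (pair_dist \<Theta> \<alpha>) = sets (borel \<Otimes>\<^sub>M borel)"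
  unfolding pair_dist_def sets_density by (rule sets_pair_measure_cong) simp_all

lemma AE_pair_dist: "AE p in pair_dist \<Theta> \<alpha>. p \<in> \<Theta> \<times> \<Theta>"
proof -
  have "(\<lambda>p. ennreal (Pdens \<Theta> \<alpha> (fst p) * Pdens \<Theta> \<alpha> (snd p))) \<in> borel_measurable (lborel \<Otimes>\<^sub>M lborel)"
    by measurable
  then show ?thesis unfolding pair_dist_def
    by (subst AE_density) (auto simp: Pdens_def split: if_splits)
qed

lemma phase_measurable[measurable]: "phase \<alpha> \<in> borel_measurable borel"
  unfolding phase_def[abs_def] by measurable

lemma phased_state_measurable[measurable]: "phased_state \<alpha> U \<in> borel_measurable borel"
  by (rule borel_measurable_vecI) (simp add: phased_state_def circ_state_def matrix_vector_mult_def)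

lemma Xpair_measurable[measurable]: "Xpair \<alpha> U Op \<in> borel_measurable (borel \<Otimes>\<^sub>M borel)"
  unfolding Xpair_def[abs_def] cinner_def circ_state_def matrix_vector_mult_def vec_lambda_beta
  by measurable

lemma norm_circ_state: "\<theta> \<in> \<Theta> \<Longrightarrow> norm (circ_state U \<theta>) = 1"
  by (simp add: circ_state_def norm_unitary_mult U_unitary ket0_def)

lemma norm_phased_state_le: "\<theta> \<in> \<Theta> \<Longrightarrow> norm (phased_state \<alpha> U \<theta>) \<le> 1"
  by (simp add: phased_state_def norm_vector_scalar_mult norm_circ_state norm_phase_le)

lemma integrable_phased_state: "integrable (param_dist \<Theta> \<alpha>) (phased_state \<alpha> U)"
proof -
  interpret D: prob_space "param_dist \<Theta> \<alpha>" by (rule prob_space_param_dist)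
  show ?thesis
    using AE_param_dist norm_phased_state_le
    by (intro D.integrable_const_bound[where B=1]) auto
qed

lemma psi_eq_integral: "psi \<Theta> \<alpha> U = (\<integral>\<theta>. phased_state \<alpha> U \<theta> \<partial>param_dist \<Theta> \<alpha>)"
proof -
  have "(\<integral>\<theta>. phased_state \<alpha> U \<theta> \<partial>param_dist \<Theta> \<alpha>)
      = (\<integral>\<theta>. Pdens \<Theta> \<alpha> \<theta> *\<^sub>R phased_state \<alpha> U \<theta> \<partial>lborel)"
    unfolding param_dist_def by (rule integral_density) (simp_all add: Pdens_nonneg)
  also have "\<dots> = psi \<Theta> \<alpha> U"
    unfolding psi_def set_lebesgue_integral_def
    by (intro Bochner_Integration.integral_cong)
       (auto simp: phased_state_def scaleR_vec_def vec_eq_iff scaleR_conv_of_real Pdens_def indicator_def)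
  finally show ?thesis by simp
qed

lemma norm_Xpair_le: "p \<in> \<Theta> \<times> \<Theta> \<Longrightarrow> norm (Xpair \<alpha> U Op p) \<le> spec_norm Op"
proof -
  assume p: "p \<in> \<Theta> \<times> \<Theta>"
  have "norm (Xpair \<alpha> U Op p) = norm (phase \<alpha> (fst p)) * norm (phase \<alpha> (snd p)) *
        norm (cinner (circ_state U (snd p)) (Op *v circ_state U (fst p)))"
    by (simp add: Xpair_def norm_mult)
  also have "\<dots> \<le> 1 * 1 * (norm (circ_state U (snd p)) * norm (Op *v circ_state U (fst p)))"
    by (intro mult_mono norm_phase_le norm_cinner_le) auto
  also have "\<dots> \<le> spec_norm Op"
    using p norm_le_spec_norm[of Op "circ_state U (fst p)"] by (auto simp: norm_circ_state)
  finally show ?thesis .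
qed

text \<open>Expanding both copies of \<open>\<psi>\<close> as integrals turns \<open>\<langle>\<psi>|O|\<psi>\<rangle>\<close> into the double
  integral of \<open>X\<^sub>\<theta>\<^sub>,\<^sub>\<theta>\<^sub>'\<close>, which Fubini identifies with the integral over the pair distribution.\<close>

lemma expval_eq_integral_Xpair:
  shows "integrable (pair_dist \<Theta> \<alpha>) (Xpair \<alpha> U Op)"
    and "expval \<Theta> \<alpha> U Op = (\<integral>p. Xpair \<alpha> U Op p \<partial>pair_dist \<Theta> \<alpha>)"
proof -
  interpret D: prob_space "param_dist \<Theta> \<alpha>" by (rule prob_space_param_dist)
  interpret P: pair_prob_space "param_dist \<Theta> \<alpha>" "param_dist \<Theta> \<alpha>" by unfold_locales
  interpret PD: prob_space "pair_dist \<Theta> \<alpha>" by (rule prob_space_pair_dist)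
  let ?D = "param_dist \<Theta> \<alpha>" and ?v = "phased_state \<alpha> U"
  show int_X: "integrable (pair_dist \<Theta> \<alpha>) (Xpair \<alpha> U Op)"
    using AE_pair_dist norm_Xpair_le
    by (intro PD.integrable_const_bound[where B="spec_norm Op"]) auto
  note int_v = integrable_phased_state
  have int_Ov: "integrable ?D (\<lambda>\<theta>. Op *v ?v \<theta>)"
    by (rule integrable_bounded_linear[OF matrix_vector_mul_bounded_linear int_v])
  have "expval \<Theta> \<alpha> U Op = (\<integral>\<theta>. cinner (psi \<Theta> \<alpha> U) (Op *v ?v \<theta>) \<partial>?D)"
    unfolding expval_def psi_eq_integral[symmetric]
    by (simp add: psi_eq_integral integral_bounded_linear[OF matrix_vector_mul_bounded_linear int_v]
        integral_bounded_linear[OF bounded_linear_cinner int_Ov])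
  also have "\<dots> = (\<integral>\<theta>. (\<integral>\<theta>'. cinner (?v \<theta>') (Op *v ?v \<theta>) \<partial>?D) \<partial>?D)"
  proof (intro Bochner_Integration.integral_cong refl)
    fix \<theta>
    have "cinner (psi \<Theta> \<alpha> U) (Op *v ?v \<theta>) = cnj (cinner (Op *v ?v \<theta>) (psi \<Theta> \<alpha> U))"
      by (simp add: cnj_cinner)
    also have "\<dots> = cnj (\<integral>\<theta>'. cinner (Op *v ?v \<theta>) (?v \<theta>') \<partial>?D)"
      by (simp add: psi_eq_integral integral_bounded_linear[OF bounded_linear_cinner int_v])
    also have "\<dots> = (\<integral>\<theta>'. cinner (?v \<theta>') (Op *v ?v \<theta>) \<partial>?D)"
      by (simp add: cnj_cinner flip: Bochner_Integration.integral_cnj)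
    finally show "cinner (psi \<Theta> \<alpha> U) (Op *v ?v \<theta>) = (\<integral>\<theta>'. cinner (?v \<theta>') (Op *v ?v \<theta>) \<partial>?D)" .
  qed
  also have "\<dots> = (\<integral>\<theta>. (\<integral>\<theta>'. Xpair \<alpha> U Op (\<theta>, \<theta>') \<partial>?D) \<partial>?D)"
    by (simp add: phased_state_def cinner_scalar_mult Xpair_def mult_ac)
  also have "\<dots> = (\<integral>(\<theta>, \<theta>'). Xpair \<alpha> U Op (\<theta>, \<theta>') \<partial>(?D \<Otimes>\<^sub>M ?D))"
    by (rule P.integral_fst) (use int_X in \<open>simp add: pair_dist_eq\<close>)
  finally show "expval \<Theta> \<alpha> U Op = (\<integral>p. Xpair \<alpha> U Op p \<partial>pair_dist \<Theta> \<alpha>)"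
    by (simp add: pair_dist_eq)
qed

lemma sample_moments:
  assumes valid: "valid_measurement \<Theta> \<alpha> U Op \<sigma> Q"
  defines "S \<equiv> pair_dist \<Theta> \<alpha> \<bind> Q"
  shows "prob_space S" "sets S = sets borel" "integrable S (\<lambda>x. x\<^sup>2)"
    "(\<integral>x. x \<partial>S) = Re (expval \<Theta> \<alpha> U Op)"
    "(\<integral>x. (x - Re (expval \<Theta> \<alpha> U Op))\<^sup>2 \<partial>S) \<le> (spec_norm Op)\<^sup>2 + \<sigma>\<^sup>2"
proof -
  let ?X = "\<lambda>p. Re (Xpair \<alpha> U Op p)"
  have "sets (pair_dist \<Theta> \<alpha>) = sets (lborel \<Otimes>\<^sub>M lborel)"
    unfolding pair_dist_def by (rule sets_density)
  then have Q: "Q \<in> pair_dist \<Theta> \<alpha> \<rightarrow>\<^sub>M prob_algebra borel"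
    using valid measurable_cong_sets[OF _ refl] unfolding valid_measurement_def by blast
  have component: "integrable (Q p) (\<lambda>x. x\<^sup>2) \<and> (\<integral>x. x \<partial>Q p) = ?X p
      \<and> (\<integral>x. x\<^sup>2 \<partial>Q p) \<le> \<sigma>\<^sup>2 + (spec_norm Op)\<^sup>2"
    if p: "p \<in> space (pair_dist \<Theta> \<alpha>)" "p \<in> \<Theta> \<times> \<Theta>" for p
  proof -
    interpret Qp: prob_space "Q p"
      using measurable_space[OF Q p(1)] by (simp add: space_prob_algebra)
    have [measurable_cong]: "sets (Q p) = sets borel"
      using measurable_space[OF Q p(1)] by (simp add: space_prob_algebra)
    have moments: "integrable (Q p) (\<lambda>x. x\<^sup>2)" "(\<integral>x. x \<partial>Q p) = ?X p"
        "(\<integral>x. (x - ?X p)\<^sup>2 \<partial>Q p) \<le> \<sigma>\<^sup>2"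
      using valid p(2) by (auto simp: valid_measurement_def)
    have "\<bar>?X p\<bar> \<le> spec_norm Op"
      using abs_Re_le_cmod norm_Xpair_le[OF p(2)] order_trans by blast
    then have "(\<integral>x. x\<^sup>2 \<partial>Q p) \<le> \<sigma>\<^sup>2 + (spec_norm Op)\<^sup>2"
      using moments by (intro Qp.second_moment_le[where X="\<lambda>x. x"]) simp_all
    then show ?thesis using moments by simp
  qed
  have moments_AE: "AE p in pair_dist \<Theta> \<alpha>. integrable (Q p) (\<lambda>x. x\<^sup>2) \<and> (\<integral>x. x \<partial>Q p) = ?X p
      \<and> (\<integral>x. x\<^sup>2 \<partial>Q p) \<le> \<sigma>\<^sup>2 + (spec_norm Op)\<^sup>2"
    using AE_pair_dist AE_space by eventually_elim (use component in blast)
  have "?X \<in> borel_measurable (pair_dist \<Theta> \<alpha>)" by measurable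
  note mix = bind_moments[OF prob_space_pair_dist Q this moments_AE, folded S_def]
  interpret S: prob_space S by (rule mix(1))
  show "prob_space S" "sets S = sets borel" "integrable S (\<lambda>x. x\<^sup>2)" using mix by simp_all
  show mean: "(\<integral>x. x \<partial>S) = Re (expval \<Theta> \<alpha> U Op)"
    using mix(4) expval_eq_integral_Xpair by simp
  have "integrable S (\<lambda>x. x)"
    using S.square_integrable_imp_integrable[OF _ mix(3)] mix(2) by simp
  then have "(\<integral>x. (x - Re (expval \<Theta> \<alpha> U Op))\<^sup>2 \<partial>S) \<le> (\<integral>x. x\<^sup>2 \<partial>S)"
    using S.variance_eq[of "\<lambda>x. x"] mix(3) mean by simp
  then show "(\<integral>x. (x - Re (expval \<Theta> \<alpha> U Op))\<^sup>2 \<partial>S) \<le> (spec_norm Op)\<^sup>2 + \<sigma>\<^sup>2"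
    using mix(5) by simp
qed

lemma estimator_deviation_prob_le:
  fixes \<Omega> :: "'w measure" and E :: "'w \<Rightarrow> real"
  assumes valid: "valid_measurement \<Theta> \<alpha> U Op \<sigma> Q" and "M > 0" and "\<kappa> > 0"
    and \<Omega>: "prob_space \<Omega>" and E: "E \<in> borel_measurable \<Omega>"
    and law: "distr \<Omega> borel E = estimator_dist \<Theta> \<alpha> Q M"
  defines "\<eta> \<equiv> sqrt (((spec_norm Op)\<^sup>2 + \<sigma>\<^sup>2) / (\<kappa> * real M))"
  shows "measure \<Omega> {\<omega> \<in> space \<Omega>. \<eta> < \<bar>E \<omega> - Re (expval \<Theta> \<alpha> U Op)\<bar>} \<le> \<kappa>"
proof -
  let ?m = "Re (expval \<Theta> \<alpha> U Op)"
  let ?P = "PiM {..<M} (\<lambda>_. pair_dist \<Theta> \<alpha> \<bind> Q)"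
  let ?mean = "\<lambda>\<omega>. (\<Sum>l<M. \<omega> l) / real M"
  let ?far = "{y. \<eta> < \<bar>y - ?m\<bar>}"
  note S = sample_moments[OF valid]
  interpret P: prob_space ?P by (intro prob_space_PiM S(1))
  note var = sample_mean_variance[OF S(1-4) \<open>M > 0\<close>]
  note mean_measurable = sample_mean_measurable[OF S(1-4)]
  have "\<eta>\<^sup>2 = ((spec_norm Op)\<^sup>2 + \<sigma>\<^sup>2) / (\<kappa> * real M)"
    unfolding \<eta>_def using \<open>M > 0\<close> \<open>\<kappa> > 0\<close> by simp
  then have bound: "((spec_norm Op)\<^sup>2 + \<sigma>\<^sup>2) / real M = \<kappa> * \<eta>\<^sup>2"
    using \<open>M > 0\<close> \<open>\<kappa> > 0\<close> by simp
  have "(\<integral>\<omega>. (?mean \<omega> - ?m)\<^sup>2 \<partial>?P) \<le> \<kappa> * \<eta>\<^sup>2"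
    unfolding var(2) bound[symmetric] using S(5) by (rule divide_right_mono) simp
  then have deviation: "P.prob {\<omega> \<in> space ?P. \<eta> < \<bar>?mean \<omega> - ?m\<bar>} \<le> \<kappa>"
    using \<open>\<kappa> > 0\<close> \<eta>_def by (intro P.deviation_prob_le mean_measurable var(1)) auto
  have far: "?far \<in> sets borel" by measurable
  have "measure \<Omega> {\<omega> \<in> space \<Omega>. \<eta> < \<bar>E \<omega> - ?m\<bar>} = measure \<Omega> (E -` ?far \<inter> space \<Omega>)"
    by (rule arg_cong[where f="measure \<Omega>"]) auto
  also have "\<dots> = measure (distr \<Omega> borel E) ?far"
    by (rule measure_distr[symmetric, OF E far])
  also have "\<dots> = measure (distr ?P borel ?mean) ?far"
    unfolding law estimator_dist_def ..
  also have "\<dots> = measure ?P (?mean -` ?far \<inter> space ?P)"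
    by (rule measure_distr[OF mean_measurable far])
  also have "\<dots> = P.prob {\<omega> \<in> space ?P. \<eta> < \<bar>?mean \<omega> - ?m\<bar>}"
    by (rule arg_cong[where f="measure ?P"]) auto
  also have "\<dots> \<le> \<kappa>" by (rule deviation)
  finally show ?thesis .
qed

end

theorem theorem2:
  fixes \<Theta> :: "(real ^ 'k) set"
    and \<alpha> :: "real ^ 'k \<Rightarrow> complex"
    and U :: "real ^ 'k \<Rightarrow> complex ^ (bool ^ 'q) ^ (bool ^ 'q)"
    and H :: "complex ^ (bool ^ 'q) ^ (bool ^ 'q)"
    and \<sigma>H \<sigma>1 \<kappa> :: real
    and M :: nat
    and QH Q1 :: "(real ^ 'k) \<times> (real ^ 'k) \<Rightarrow> real measure"
    and \<Omega> :: "'w measure"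
    and EH E1 :: "'w \<Rightarrow> real"
  assumes Theta_meas: "\<Theta> \<in> sets lborel"
    and alpha_meas: "\<alpha> \<in> borel_measurable lborel"
    and U_unitary: "\<And>\<theta>. \<theta> \<in> \<Theta> \<Longrightarrow> unitary (U \<theta>)"
    and U_meas: "U \<in> borel_measurable lborel"
    and C_fin: "set_integrable lborel \<Theta> (\<lambda>\<theta>. norm (\<alpha> \<theta>))"
    and C_pos: "normC \<Theta> \<alpha> > 0"
    and H_herm: "hermitian H"
    and norm1_pos: "Re (expval \<Theta> \<alpha> U (mat 1)) > 0"
    and M_pos: "M > 0"
    and kappa_pos: "\<kappa> > 0"
    and QH_valid: "valid_measurement \<Theta> \<alpha> U H \<sigma>H QH"
    and Q1_valid: "valid_measurement \<Theta> \<alpha> U (mat 1) \<sigma>1 Q1"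
    and Omega: "prob_space \<Omega>"
    and EH_rv: "EH \<in> borel_measurable \<Omega>"
    and E1_rv: "E1 \<in> borel_measurable \<Omega>"
    and EH_law: "distr \<Omega> borel EH = estimator_dist \<Theta> \<alpha> QH M"
    and E1_law: "distr \<Omega> borel E1 = estimator_dist \<Theta> \<alpha> Q1 M"
  shows
    "let nH = spec_norm H;
         \<eta>H = sqrt ((nH ^ 2 + \<sigma>H ^ 2) / (\<kappa> * real M));
         \<eta>1 = sqrt ((1 + \<sigma>1 ^ 2) / (\<kappa> * real M));
         I = Re (expval \<Theta> \<alpha> U (mat 1));
         Ht = Re (expval \<Theta> \<alpha> U H / expval \<Theta> \<alpha> U (mat 1));
         L = (\<lambda>\<omega>. (EH \<omega> + \<eta>H) / (E1 \<omega> + \<eta>1))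
     in measure \<Omega> {\<omega> \<in> space \<Omega>. min Ht 0 \<le> L \<omega> \<and> L \<omega> \<le> Ht + 2 * (\<eta>H + nH * \<eta>1) / I}
          \<ge> 1 - 2 * \<kappa>"
proof -
  interpret \<Omega>: prob_space \<Omega> by (rule Omega)
  define nH \<eta>H \<eta>1 where "nH = spec_norm H"
    and "\<eta>H = sqrt ((nH ^ 2 + \<sigma>H ^ 2) / (\<kappa> * real M))"
    and "\<eta>1 = sqrt ((1 + \<sigma>1 ^ 2) / (\<kappa> * real M))"
  define h I where "h = Re (expval \<Theta> \<alpha> U H)" and "I = Re (expval \<Theta> \<alpha> U (mat 1))"
  define L where "L \<omega> = (EH \<omega> + \<eta>H) / (E1 \<omega> + \<eta>1)" for \<omega>
  have ratio: "Re (expval \<Theta> \<alpha> U H / expval \<Theta> \<alpha> U (mat 1)) = h / I"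
    unfolding h_def I_def expval_def by (rule Re_divide_cinner_self)
  have h_le: "\<bar>h\<bar> \<le> nH * I"
    unfolding h_def I_def nH_def expval_def by (rule abs_Re_cinner_le_spec_norm)
  have unitary: "\<forall>\<theta>\<in>\<Theta>. unitary (U \<theta>)" using U_unitary by blast
  note deviation = estimator_deviation_prob_le[OF Theta_meas alpha_meas unitary U_meas C_fin C_pos _
      M_pos kappa_pos Omega]
  have "\<Omega>.prob {\<omega> \<in> space \<Omega>. \<eta>H < \<bar>EH \<omega> - h\<bar>} \<le> \<kappa>"
    using deviation[OF QH_valid EH_rv EH_law] by (simp add: \<eta>H_def nH_def h_def)
  moreover have "\<Omega>.prob {\<omega> \<in> space \<Omega>. \<eta>1 < \<bar>E1 \<omega> - I\<bar>} \<le> \<kappa>"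
    using deviation[OF Q1_valid E1_rv E1_law] by (simp add: \<eta>1_def I_def spec_norm_mat_1)
  moreover have "0 \<le> nH" "0 \<le> \<eta>H" "0 \<le> \<eta>1"
    using kappa_pos by (simp_all add: nH_def \<eta>H_def \<eta>1_def spec_norm_nonneg)
  ultimately have "\<Omega>.prob {\<omega> \<in> space \<Omega>. min (h / I) 0 \<le> L \<omega> \<and> L \<omega> \<le> h / I + 2 * (\<eta>H + nH * \<eta>1) / I}
      \<ge> 1 - (\<kappa> + \<kappa>)"
    using upper_confidence_ratio_bounds[OF _ h_le] norm1_pos EH_rv E1_rv
    by (intro \<Omega>.prob_ge_of_failure_bounds[where P="\<lambda>\<omega>. \<bar>EH \<omega> - h\<bar> \<le> \<eta>H"
          and Q="\<lambda>\<omega>. \<bar>E1 \<omega> - I\<bar> \<le> \<eta>1"]) (auto simp: L_def I_def not_le)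
  then show ?thesis
    by (simp add: Let_def ratio L_def nH_def \<eta>H_def \<eta>1_def h_def I_def)
qed

end
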